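(* Let $(\mathcal{Y},\eta)$ be an $(n,m)$-voltage operator, let $\operatorname{Aut}(\mathcal{Y},\eta)$ be the subgroup of $\operatorname{Aut}(\mathcal{Y})$ of all $\tau$ with $\eta(W\tau)=\eta(W)$ for every $W\in\Pi(\mathcal{Y})$, and let $\mathcal{X}$ be an $n$-premaniplex. Let $\operatorname{Aut}(\mathcal{X})$ act on $\mathcal{X}\rtimes_\eta\mathcal{Y}$ by $(x,y)\mapsto(x\alpha,y)$ and $\operatorname{Aut}(\mathcal{Y},\eta)$ by $(x,y)\mapsto(x,y\tau)$. Then the subgroup of $\operatorname{Aut}(\mathcal{X}\rtimes_\eta\mathcal{Y})$ generated by these two groups is $\operatorname{Aut}(\mathcal{X})\times\operatorname{Aut}(\mathcal{Y},\eta)$, acting by $(x,y)(\alpha,\tau)=(x\alpha,y\tau)$.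
   Context: An $n$-premaniplex is an edge-coloured graph (semi-edges and parallel edges allowed) with colours $\{0,\dots,n-1\}$ such that every vertex (flag) is the start of exactly one dart of each colour, and for $|i-j|\ge2$ alternating $i,j$-paths of length 4 are closed; $x^i$ is the $i$-adjacent flag of $x$. $\mathcal{C}^n=\langle r_0,\dots,r_{n-1}\mid r_i^2,\ (r_ir_j)^2\ (|i-j|\ge2)\rangle$ acts on the left on flags by $r_ix=x^i$. Automorphisms act on the right and map paths to paths, $W\mapsto W\tau$. For a flag $y$ of an $m$-premaniplex $\mathcal{Y}$ and $\omega\in\mathcal{C}^m$, $W_\omega(y)$ is the homotopy class of paths from $y$ whose colour sequence $i_1,\dots,i_k$ satisfies $r_{i_k}\cdots r_{i_1}=\omega$; these form the fundamental groupoid $\Pi(\mathcal{Y})$. A voltage assignment $\eta:\Pi(\mathcal{Y})\to\mathcal{C}^n$ satisfies $\eta(W_1W_2)=\eta(W_2)\eta(W_1)$; $(\mathcal{Y},\eta)$ is an $(n,m)$-voltage operator. $\mathcal{X}\rtimes_\eta\mathcal{Y}$ has flags $\mathcal{X}\times\mathcal{Y}$ and $(x,y)^i=(\eta(W_{r_i}(y))x,r_iy)$, $i\in\{0,\dots,m-1\}$. *)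

theory Defs
  imports "HOL-Algebra.Algebra"
begin

text \<open>Words over the colours {0..<n} represent elements of the universal Coxeter group C^n.
  Convention: the word [i1,...,ik] stands for the group element r_ik ... r_i1
  (letters listed in the order they are applied), so concatenation w1 @ w2
  represents the product (element of w2) * (element of w1).\<close>

inductive cox_eq :: "nat \<Rightarrow> nat list \<Rightarrow> nat list \<Rightarrow> bool" for n where
  cox_refl: "cox_eq n w w"
| cox_sym: "cox_eq n u v \<Longrightarrow> cox_eq n v u"
| cox_trans: "cox_eq n u v \<Longrightarrow> cox_eq n v w \<Longrightarrow> cox_eq n u w"
| cox_invol: "i < n \<Longrightarrow> cox_eq n (u @ [i, i] @ v) (u @ v)"
| cox_comm: "i < n \<Longrightarrow> j < n \<Longrightarrow> 2 \<le> (if i \<le> j then j - i else i - j)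
      \<Longrightarrow> cox_eq n (u @ [i, j, i, j] @ v) (u @ v)"

definition premaniplex :: "nat \<Rightarrow> 'a set \<Rightarrow> (nat \<Rightarrow> 'a \<Rightarrow> 'a) \<Rightarrow> bool" where
  "premaniplex n F adj \<longleftrightarrow>
     (\<forall>i<n. \<forall>x\<in>F. adj i x \<in> F \<and> adj i (adj i x) = x) \<and>
     (\<forall>i<n. \<forall>j<n. 2 \<le> (if i \<le> j then j - i else i - j) \<longrightarrow>
        (\<forall>x\<in>F. adj j (adj i (adj j (adj i x))) = x))"

text \<open>Left action of (the element represented by) a word on flags:
  the first letter is applied first, i.e. r_ik ... r_i1 x.\<close>
definition flag_act :: "(nat \<Rightarrow> 'a \<Rightarrow> 'a) \<Rightarrow> nat list \<Rightarrow> 'a \<Rightarrow> 'a" where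
  "flag_act adj w x = foldl (\<lambda>z i. adj i z) x w"

text \<open>A voltage assignment on the fundamental groupoid: the class W_omega(y) is
  represented by the start flag y and any colour word of a path in it
  (a path in a premaniplex is determined by its start and colour sequence).
  eta y w is a word representing eta(W).\<close>
definition voltage_operator ::
  "nat \<Rightarrow> nat \<Rightarrow> 'b set \<Rightarrow> (nat \<Rightarrow> 'b \<Rightarrow> 'b) \<Rightarrow> ('b \<Rightarrow> nat list \<Rightarrow> nat list) \<Rightarrow> bool" where
  "voltage_operator n m FY adjY eta \<longleftrightarrow>
     premaniplex m FY adjY \<and>
     (\<forall>y\<in>FY. \<forall>w\<in>lists {..<m}. eta y w \<in> lists {..<n}) \<and>
     (\<forall>y\<in>FY. \<forall>w\<in>lists {..<m}. \<forall>w'\<in>lists {..<m}.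
        cox_eq m w w' \<longrightarrow> cox_eq n (eta y w) (eta y w')) \<and>
     (\<forall>y\<in>FY. \<forall>w1\<in>lists {..<m}. \<forall>w2\<in>lists {..<m}.
        cox_eq n (eta y (w1 @ w2)) (eta y w1 @ eta (flag_act adjY w1 y) w2))"

text \<open>Adjacency of the voltage product FX \<rtimes>_eta FY on flags FX \<times> FY:
  (x,y)^i = (eta(W_{r_i}(y)) x, r_i y).\<close>
definition prod_adj ::
  "('b \<Rightarrow> nat list \<Rightarrow> nat list) \<Rightarrow> (nat \<Rightarrow> 'a \<Rightarrow> 'a) \<Rightarrow> (nat \<Rightarrow> 'b \<Rightarrow> 'b)
     \<Rightarrow> nat \<Rightarrow> 'a \<times> 'b \<Rightarrow> 'a \<times> 'b" where
  "prod_adj eta adjX adjY i p = (flag_act adjX (eta (snd p) [i]) (fst p), adjY i (snd p))"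

text \<open>Automorphism group of a premaniplex, as a subset of the bijections of the flag set
  (functions are extensional; x tau is written tau x).\<close>
definition aut :: "nat \<Rightarrow> 'a set \<Rightarrow> (nat \<Rightarrow> 'a \<Rightarrow> 'a) \<Rightarrow> ('a \<Rightarrow> 'a) set" where
  "aut n F adj = {t \<in> Bij F. \<forall>x\<in>F. \<forall>i<n. t (adj i x) = adj i (t x)}"

definition aut_eta ::
  "nat \<Rightarrow> nat \<Rightarrow> 'b set \<Rightarrow> (nat \<Rightarrow> 'b \<Rightarrow> 'b) \<Rightarrow> ('b \<Rightarrow> nat list \<Rightarrow> nat list) \<Rightarrow> ('b \<Rightarrow> 'b) set" where
  "aut_eta n m FY adjY eta = {t \<in> aut m FY adjY.
     \<forall>y\<in>FY. \<forall>w\<in>lists {..<m}. cox_eq n (eta (t y) w) (eta y w)}"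

definition liftX :: "'a set \<Rightarrow> 'b set \<Rightarrow> ('a \<Rightarrow> 'a) \<Rightarrow> ('a \<times> 'b \<Rightarrow> 'a \<times> 'b)" where
  "liftX FX FY a = restrict (\<lambda>p. (a (fst p), snd p)) (FX \<times> FY)"

definition liftY :: "'a set \<Rightarrow> 'b set \<Rightarrow> ('b \<Rightarrow> 'b) \<Rightarrow> ('a \<times> 'b \<Rightarrow> 'a \<times> 'b)" where
  "liftY FX FY t = restrict (\<lambda>p. (fst p, t (snd p))) (FX \<times> FY)"

definition lift_pair :: "'a set \<Rightarrow> 'b set \<Rightarrow> ('a \<Rightarrow> 'a) \<times> ('b \<Rightarrow> 'b) \<Rightarrow> ('a \<times> 'b \<Rightarrow> 'a \<times> 'b)" where
  "lift_pair FX FY ab = restrict (\<lambda>p. (fst ab (fst p), snd ab (snd p))) (FX \<times> FY)"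

end

theory Submission
  imports Defs
begin

text \<open>An automorphism \<alpha> of X commutes with the action of every colour word, and
  \<tau> \<in> Aut(Y,\<eta>) changes the voltage of a path only up to equality in C^n, which
  acts trivially on the flags of a premaniplex. Hence (x,y) \<mapsto> (x\<alpha>, y\<tau>) is an
  automorphism of X \<rtimes> Y, and (\<alpha>,\<tau>) \<mapsto> (x,y) \<mapsto> (x\<alpha>, y\<tau>) is an injective
  homomorphism from Aut(X) \<times> Aut(Y,\<eta>) into the flag permutations. Its image is
  generated by the images of the two factors because (\<alpha>,\<tau>) = (\<alpha>,1)(1,\<tau>).\<close>

lemma flag_act_Nil [simp]: "flag_act adj [] x = x"
  by (simp add: flag_act_def)

lemma flag_act_Cons [simp]: "flag_act adj (i # w) x = flag_act adj w (adj i x)"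
  by (simp add: flag_act_def)

lemma flag_act_append: "flag_act adj (u @ v) x = flag_act adj v (flag_act adj u x)"
  by (simp add: flag_act_def)

lemma flag_act_closed:
  assumes "premaniplex n F adj" "w \<in> lists {..<n}" "x \<in> F"
  shows "flag_act adj w x \<in> F"
  using assms(2,3)
proof (induction w arbitrary: x)
  case (Cons i w)
  then show ?case using assms(1) by (auto simp: premaniplex_def)
qed simp

text \<open>The congruence \<open>cox_eq n\<close> may pass through words with letters \<open>\<ge> n\<close>, about
  which a premaniplex says nothing; after deleting those letters every defining
  relation acts trivially.\<close>

lemma flag_act_filter_cox_eq:
  assumes P: "premaniplex n F adj" and "cox_eq n u v" and "x \<in> F"
  shows "flag_act adj (filter (\<lambda>i. i < n) u) x = flag_act adj (filter (\<lambda>i. i < n) v) x"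
  using assms(2,3)
proof (induction arbitrary: x rule: cox_eq.induct)
  case (cox_invol i u v)
  have "flag_act adj (filter (\<lambda>i. i < n) u) x \<in> F"
    using cox_invol by (intro flag_act_closed[OF P]) auto
  then show ?case using cox_invol P by (simp add: flag_act_append premaniplex_def)
next
  case (cox_comm i j u v)
  have "flag_act adj (filter (\<lambda>i. i < n) u) x \<in> F"
    using cox_comm by (intro flag_act_closed[OF P]) auto
  then show ?case using cox_comm P unfolding premaniplex_def by (simp add: flag_act_append)
qed auto

lemma flag_act_cox_eq:
  assumes "premaniplex n F adj" "cox_eq n u v" "u \<in> lists {..<n}" "v \<in> lists {..<n}" "x \<in> F"
  shows "flag_act adj u x = flag_act adj v x"
proof -
  have "filter (\<lambda>i. i < n) u = u" "filter (\<lambda>i. i < n) v = v"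
    using assms(3,4) by (auto simp: filter_id_conv)
  then show ?thesis using flag_act_filter_cox_eq[OF assms(1,2,5)] by simp
qed

lemma aut_flag_act_commute:
  assumes "premaniplex n F adj" "t \<in> aut n F adj" "w \<in> lists {..<n}" "x \<in> F"
  shows "t (flag_act adj w x) = flag_act adj w (t x)"
  using assms(3,4)
proof (induction w arbitrary: x)
  case (Cons i w)
  then have "adj i x \<in> F" using assms(1) by (auto simp: premaniplex_def)
  then show ?case using Cons assms(2) by (auto simp: aut_def)
qed simp

lemma inv_into_commute:
  assumes "bij_betw t F F" "f ` F \<subseteq> F" "\<And>x. x \<in> F \<Longrightarrow> t (f x) = f (t x)" "x \<in> F"
  shows "inv_into F t (f x) = f (inv_into F t x)"
proof -
  define z where "z = inv_into F t x"
  have z: "z \<in> F" "t z = x"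
    using assms(1,4) by (auto simp: z_def bij_betw_def inv_into_into f_inv_into_f)
  then have "t (f z) = f x" using assms(3) by simp
  then show ?thesis
    using assms(1,2) z by (metis bij_betw_def image_subset_iff inv_into_f_f z_def)
qed

lemma BijGroup_mult: "f \<in> Bij S \<Longrightarrow> g \<in> Bij S \<Longrightarrow> f \<otimes>\<^bsub>BijGroup S\<^esub> g = compose S f g"
  by (simp add: BijGroup_def)

lemma subgroup_aut:
  assumes P: "premaniplex n F adj"
  shows "subgroup (aut n F adj) (BijGroup F)"
proof (rule group.subgroupI[OF group_BijGroup])
  have adj_closed: "adj i ` F \<subseteq> F" if "i < n" for i
    using P that by (auto simp: premaniplex_def)
  show "aut n F adj \<subseteq> carrier (BijGroup F)"
    by (auto simp: aut_def BijGroup_def)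
  have "(\<lambda>x\<in>F. x) \<in> aut n F adj"
    using adj_closed id_Bij by (fastforce simp: aut_def)
  then show "aut n F adj \<noteq> {}" by blast
next
  fix t assume t: "t \<in> aut n F adj"
  then have tB: "t \<in> Bij F" by (simp add: aut_def)
  have "inv_into F t (adj i x) = adj i (inv_into F t x)" if "x \<in> F" "i < n" for x i
    using t tB P that
    by (intro inv_into_commute) (auto simp: aut_def Bij_def premaniplex_def)
  then show "inv\<^bsub>BijGroup F\<^esub> t \<in> aut n F adj"
    using P inv_BijGroup[OF tB] restrict_inv_into_Bij[OF tB]
    by (auto simp: aut_def premaniplex_def)
next
  fix s t assume s: "s \<in> aut n F adj" and t: "t \<in> aut n F adj"
  then have B: "s \<in> Bij F" "t \<in> Bij F" by (auto simp: aut_def)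
  then have "t x \<in> F" if "x \<in> F" for x using that Bij_imp_funcset by blast
  then show "s \<otimes>\<^bsub>BijGroup F\<^esub> t \<in> aut n F adj"
    using P compose_Bij[OF B] s t
    by (auto simp: BijGroup_mult[OF B] aut_def compose_def premaniplex_def)
qed

lemma subgroup_aut_eta:
  assumes V: "voltage_operator n m FY adjY eta"
  shows "subgroup (aut_eta n m FY adjY eta) (BijGroup FY)"
proof -
  have S: "subgroup (aut m FY adjY) (BijGroup FY)"
    using V by (intro subgroup_aut) (simp add: voltage_operator_def)
  show ?thesis
  proof (rule group.subgroupI[OF group_BijGroup])
    show "aut_eta n m FY adjY eta \<subseteq> carrier (BijGroup FY)"
      using subgroup.subset[OF S] by (auto simp: aut_eta_def)
    have "\<one>\<^bsub>BijGroup FY\<^esub> \<in> aut_eta n m FY adjY eta"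
      using subgroup.one_closed[OF S] by (auto simp: aut_eta_def BijGroup_def cox_eq.cox_refl)
    then show "aut_eta n m FY adjY eta \<noteq> {}" by blast
  next
    fix t assume t: "t \<in> aut_eta n m FY adjY eta"
    then have ta: "t \<in> aut m FY adjY" and tB: "t \<in> Bij FY" by (auto simp: aut_eta_def aut_def)
    have "cox_eq n (eta (inv_into FY t y) w) (eta y w)"
      if "y \<in> FY" "w \<in> lists {..<m}" for y w
    proof -
      have z: "inv_into FY t y \<in> FY" "t (inv_into FY t y) = y"
        using tB that(1) by (auto simp: Bij_def bij_betw_def inv_into_into f_inv_into_f)
      then have "cox_eq n (eta y w) (eta (inv_into FY t y) w)"
        using t that(2) by (metis (no_types, lifting) aut_eta_def mem_Collect_eq)
      then show ?thesis by (rule cox_eq.cox_sym)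
    qed
    then show "inv\<^bsub>BijGroup FY\<^esub> t \<in> aut_eta n m FY adjY eta"
      using subgroup.m_inv_closed[OF S ta] inv_BijGroup[OF tB] by (auto simp: aut_eta_def)
  next
    fix s t assume s: "s \<in> aut_eta n m FY adjY eta" and t: "t \<in> aut_eta n m FY adjY eta"
    then have a: "s \<in> aut m FY adjY" "t \<in> aut m FY adjY" and B: "s \<in> Bij FY" "t \<in> Bij FY"
      by (auto simp: aut_eta_def aut_def)
    have "cox_eq n (eta (s (t y)) w) (eta y w)" if "y \<in> FY" "w \<in> lists {..<m}" for y w
    proof (rule cox_eq.cox_trans)
      show "cox_eq n (eta (s (t y)) w) (eta (t y) w)"
        using s B(2) that Bij_imp_funcset by (fastforce simp: aut_eta_def)
      show "cox_eq n (eta (t y) w) (eta y w)" using t that by (auto simp: aut_eta_def)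
    qed
    then show "s \<otimes>\<^bsub>BijGroup FY\<^esub> t \<in> aut_eta n m FY adjY eta"
      using subgroup.m_closed[OF S a] by (auto simp: aut_eta_def BijGroup_mult[OF B] compose_def)
  qed
qed

lemma lift_pair_Bij:
  assumes "a \<in> Bij FX" "b \<in> Bij FY"
  shows "lift_pair FX FY (a, b) \<in> Bij (FX \<times> FY)"
proof -
  have "bij_betw (map_prod a b) (FX \<times> FY) (FX \<times> FY)"
    using assms by (intro bij_betw_map_prod) (auto simp: Bij_def)
  then have "bij_betw (lift_pair FX FY (a, b)) (FX \<times> FY) (FX \<times> FY)"
    by (rule bij_betw_cong[THEN iffD1, rotated]) (auto simp: lift_pair_def)
  then show ?thesis by (simp add: Bij_def lift_pair_def)
qed

lemma lift_pair_mult: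
  assumes "a \<in> Bij FX" "c \<in> Bij FX" "b \<in> Bij FY" "d \<in> Bij FY"
  shows "lift_pair FX FY (compose FX a c, compose FY b d)
       = lift_pair FX FY (a, b) \<otimes>\<^bsub>BijGroup (FX \<times> FY)\<^esub> lift_pair FX FY (c, d)"
proof -
  have "c x \<in> FX" if "x \<in> FX" for x using assms(2) that Bij_imp_funcset by blast
  moreover have "d y \<in> FY" if "y \<in> FY" for y using assms(4) that Bij_imp_funcset by blast
  ultimately show ?thesis
    using lift_pair_Bij[OF assms(1,3)] lift_pair_Bij[OF assms(2,4)]
    by (auto simp: BijGroup_mult lift_pair_def compose_def)
qed

lemma lift_pair_hom:
  assumes "A \<subseteq> Bij FX" "B \<subseteq> Bij FY"
  shows "lift_pair FX FY
           \<in> hom ((BijGroup FX)\<lparr>carrier := A\<rparr> \<times>\<times> (BijGroup FY)\<lparr>carrier := B\<rparr>) (BijGroup (FX \<times> FY))"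
    (is "_ \<in> hom ?D _")
proof (rule homI)
  fix p assume "p \<in> carrier ?D"
  with assms show "lift_pair FX FY p \<in> carrier (BijGroup (FX \<times> FY))"
    by (auto simp: BijGroup_def intro!: lift_pair_Bij)
next
  fix p q assume "p \<in> carrier ?D" "q \<in> carrier ?D"
  with assms obtain a b c d where pq: "p = (a, b)" "q = (c, d)"
    and B: "a \<in> Bij FX" "b \<in> Bij FY" "c \<in> Bij FX" "d \<in> Bij FY" by (auto simp: subset_iff)
  have "p \<otimes>\<^bsub>?D\<^esub> q = (compose FX a c, compose FY b d)"
    using B by (simp add: pq BijGroup_mult)
  then show "lift_pair FX FY (p \<otimes>\<^bsub>?D\<^esub> q) = lift_pair FX FY p \<otimes>\<^bsub>BijGroup (FX \<times> FY)\<^esub> lift_pair FX FY q"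
    using lift_pair_mult[OF B(1,3,2,4)] by (simp add: pq)
qed

lemma inj_on_lift_pair:
  assumes "FX \<noteq> {}" "FY \<noteq> {}"
  shows "inj_on (lift_pair FX FY) (Bij FX \<times> Bij FY)"
proof (rule inj_onI)
  fix p q assume "p \<in> Bij FX \<times> Bij FY" "q \<in> Bij FX \<times> Bij FY"
    and eq: "lift_pair FX FY p = lift_pair FX FY q"
  then obtain a b c d where pq: "p = (a, b)" "q = (c, d)"
    and B: "a \<in> Bij FX" "b \<in> Bij FY" "c \<in> Bij FX" "d \<in> Bij FY" by blast
  obtain x0 y0 where x0: "x0 \<in> FX" and y0: "y0 \<in> FY" using assms by blast
  have "a x = c x" if "x \<in> FX" for x
    using fun_cong[OF eq, of "(x, y0)"] that y0 by (simp add: pq lift_pair_def)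
  then have "a = c" using B by (intro extensionalityI[of _ FX]) (auto dest: Bij_imp_extensional)
  moreover have "b y = d y" if "y \<in> FY" for y
    using fun_cong[OF eq, of "(x0, y)"] that x0 by (simp add: pq lift_pair_def)
  then have "b = d" using B by (intro extensionalityI[of _ FY]) (auto dest: Bij_imp_extensional)
  ultimately show "p = q" by (simp add: pq)
qed

lemma liftX_eq_lift_pair: "liftX FX FY a = lift_pair FX FY (a, \<lambda>y\<in>FY. y)"
  by (auto simp: liftX_def lift_pair_def)

lemma liftY_eq_lift_pair: "liftY FX FY b = lift_pair FX FY (\<lambda>x\<in>FX. x, b)"
  by (auto simp: liftY_def lift_pair_def)

lemma voltage_operator_closed:
  assumes "voltage_operator n m FY adjY eta" "y \<in> FY" "i < m"
  shows "adjY i y \<in> FY" and "eta y [i] \<in> lists {..<n}"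
  using assms by (simp_all add: voltage_operator_def premaniplex_def)

lemma prod_adj_closed:
  assumes "premaniplex n FX adjX" "voltage_operator n m FY adjY eta"
    and "p \<in> FX \<times> FY" "i < m"
  shows "prod_adj eta adjX adjY i p \<in> FX \<times> FY"
  using assms flag_act_closed[OF assms(1)] voltage_operator_closed[OF assms(2)]
  by (auto simp: prod_adj_def)

lemma lift_pair_in_aut_prod:
  assumes PX: "premaniplex n FX adjX" and V: "voltage_operator n m FY adjY eta"
    and a: "a \<in> aut n FX adjX" and t: "t \<in> aut_eta n m FY adjY eta"
  shows "lift_pair FX FY (a, t) \<in> aut m (FX \<times> FY) (prod_adj eta adjX adjY)"
proof -
  have aB: "a \<in> Bij FX" and tB: "t \<in> Bij FY" using a t by (auto simp: aut_eta_def aut_def)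
  have "lift_pair FX FY (a, t) (prod_adj eta adjX adjY i (x, y))
      = prod_adj eta adjX adjY i (lift_pair FX FY (a, t) (x, y))"
    if x: "x \<in> FX" and y: "y \<in> FY" and i: "i < m" for x y i
  proof -
    have ax: "a x \<in> FX" using aB x by (auto simp: Bij_def bij_betw_def)
    have ty: "t y \<in> FY" using tB y by (auto simp: Bij_def bij_betw_def)
    have w: "eta y [i] \<in> lists {..<n}" and w': "eta (t y) [i] \<in> lists {..<n}"
      using voltage_operator_closed(2)[OF V] y ty i by blast+
    have "a (flag_act adjX (eta y [i]) x) = flag_act adjX (eta y [i]) (a x)"
      by (rule aut_flag_act_commute[OF PX a w x])
    also have "\<dots> = flag_act adjX (eta (t y) [i]) (a x)"
    proof (rule flag_act_cox_eq[OF PX _ w w' ax], rule cox_eq.cox_sym)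
      show "cox_eq n (eta (t y) [i]) (eta y [i])" using t y w i by (simp add: aut_eta_def)
    qed
    finally have X: "a (flag_act adjX (eta y [i]) x) = flag_act adjX (eta (t y) [i]) (a x)" .
    have Y: "t (adjY i y) = adjY i (t y)" using t y i by (simp add: aut_eta_def aut_def)
    have "prod_adj eta adjX adjY i (x, y) \<in> FX \<times> FY"
      using prod_adj_closed[OF PX V _ i] x y by simp
    then have "lift_pair FX FY (a, t) (prod_adj eta adjX adjY i (x, y))
        = (a (flag_act adjX (eta y [i]) x), t (adjY i y))"
      by (simp add: lift_pair_def prod_adj_def)
    also have "\<dots> = prod_adj eta adjX adjY i (a x, t y)"
      by (simp add: X Y prod_adj_def)
    also have "\<dots> = prod_adj eta adjX adjY i (lift_pair FX FY (a, t) (x, y))"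
      using x y by (simp add: lift_pair_def)
    finally show ?thesis .
  qed
  then show ?thesis using lift_pair_Bij[OF aB tB] unfolding aut_def by blast
qed

lemma DirProd_generated_by_factors:
  assumes "group G" "group H"
  shows "carrier (subgroup_generated (G \<times>\<times> H) (carrier G \<times> {\<one>\<^bsub>H\<^esub>} \<union> {\<one>\<^bsub>G\<^esub>} \<times> carrier H))
       = carrier (G \<times>\<times> H)"
    (is "carrier (subgroup_generated _ ?S) = _")
proof
  interpret G: group G by fact
  interpret H: group H by fact
  interpret GH: group "G \<times>\<times> H" using DirProd_group assms .
  show "carrier (subgroup_generated (G \<times>\<times> H) ?S) \<subseteq> carrier (G \<times>\<times> H)"
    by (rule GH.carrier_subgroup_generated_subset)
  show "carrier (G \<times>\<times> H) \<subseteq> carrier (subgroup_generated (G \<times>\<times> H) ?S)"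
  proof clarify
    fix a b assume "(a, b) \<in> carrier (G \<times>\<times> H)"
    then have ab: "a \<in> carrier G" "b \<in> carrier H" by simp_all
    have "?S \<subseteq> carrier (subgroup_generated (G \<times>\<times> H) ?S)"
      by (rule GH.subgroup_generated_subset_carrier_subset) auto
    then have "(a, \<one>\<^bsub>H\<^esub>) \<otimes>\<^bsub>G \<times>\<times> H\<^esub> (\<one>\<^bsub>G\<^esub>, b) \<in> carrier (subgroup_generated (G \<times>\<times> H) ?S)"
      using ab subgroup.m_closed[OF GH.subgroup_subgroup_generated] by blast
    then show "(a, b) \<in> carrier (subgroup_generated (G \<times>\<times> H) ?S)"
      using ab by simp
  qed
qed

lemma DirProd_hom_image_generated_by_factors:
  assumes "group G" "group H" "group K" "h \<in> hom (G \<times>\<times> H) K"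
  shows "carrier (subgroup_generated K (h ` (carrier G \<times> {\<one>\<^bsub>H\<^esub>}) \<union> h ` ({\<one>\<^bsub>G\<^esub>} \<times> carrier H)))
       = h ` carrier (G \<times>\<times> H)"
proof -
  interpret h: group_hom "G \<times>\<times> H" K h
    using assms by (simp add: group_hom_def group_hom_axioms_def DirProd_group)
  have "carrier G \<times> {\<one>\<^bsub>H\<^esub>} \<union> {\<one>\<^bsub>G\<^esub>} \<times> carrier H \<subseteq> carrier (G \<times>\<times> H)"
    using assms(1,2) by (auto simp: group.is_monoid)
  from h.subgroup_generated_by_image[OF this] show ?thesis
    by (simp add: image_Un DirProd_generated_by_factors[OF assms(1,2)])
qed

lemma DirProd_iso_subgroup_generated_by_factor_images:
  assumes "group G" "group H" "group K" "h \<in> hom (G \<times>\<times> H) K" "inj_on h (carrier (G \<times>\<times> H))"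
  shows "h \<in> iso (G \<times>\<times> H)
           (subgroup_generated K (h ` (carrier G \<times> {\<one>\<^bsub>H\<^esub>}) \<union> h ` ({\<one>\<^bsub>G\<^esub>} \<times> carrier H)))"
  using DirProd_hom_image_generated_by_factors[OF assms(1-4)] assms(3-5)
  by (auto simp: iso_def bij_betw_def hom_into_subgroup_eq_gen)

theorem corollary6p2:
  fixes n m :: nat
    and FX :: "'a set" and adjX :: "nat \<Rightarrow> 'a \<Rightarrow> 'a"
    and FY :: "'b set" and adjY :: "nat \<Rightarrow> 'b \<Rightarrow> 'b"
    and eta :: "'b \<Rightarrow> nat list \<Rightarrow> nat list"
  assumes "premaniplex n FX adjX" and "FX \<noteq> {}"
    and "voltage_operator n m FY adjY eta" and "FY \<noteq> {}"
  shows "liftX FX FY ` aut n FX adjX \<subseteq> aut m (FX \<times> FY) (prod_adj eta adjX adjY) \<and>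
         liftY FX FY ` aut_eta n m FY adjY eta \<subseteq> aut m (FX \<times> FY) (prod_adj eta adjX adjY) \<and>
         carrier (subgroup_generated (BijGroup (FX \<times> FY))
            (liftX FX FY ` aut n FX adjX \<union> liftY FX FY ` aut_eta n m FY adjY eta))
          = lift_pair FX FY ` (aut n FX adjX \<times> aut_eta n m FY adjY eta) \<and>
         lift_pair FX FY \<in> iso
           (DirProd ((BijGroup FX)\<lparr>carrier := aut n FX adjX\<rparr>)
                    ((BijGroup FY)\<lparr>carrier := aut_eta n m FY adjY eta\<rparr>))
           (subgroup_generated (BijGroup (FX \<times> FY))
              (liftX FX FY ` aut n FX adjX \<union> liftY FX FY ` aut_eta n m FY adjY eta))"
proof -
  let ?A = "aut n FX adjX" and ?B = "aut_eta n m FY adjY eta"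
  let ?GA = "(BijGroup FX)\<lparr>carrier := ?A\<rparr>" and ?GB = "(BijGroup FY)\<lparr>carrier := ?B\<rparr>"
  have SA: "subgroup ?A (BijGroup FX)" by (rule subgroup_aut[OF assms(1)])
  have SB: "subgroup ?B (BijGroup FY)" by (rule subgroup_aut_eta[OF assms(3)])
  have groups: "group ?GA" "group ?GB" "group (BijGroup (FX \<times> FY))"
    using SA SB by (simp_all add: subgroup.subgroup_is_group group_BijGroup)
  have sub: "?A \<subseteq> Bij FX" "?B \<subseteq> Bij FY"
    using subgroup.subset[OF SA] subgroup.subset[OF SB] by (simp_all add: BijGroup_def)
  note hom = lift_pair_hom[OF sub]
  have inj: "inj_on (lift_pair FX FY) (carrier (?GA \<times>\<times> ?GB))"
    using inj_on_lift_pair[OF assms(2,4)] sub by (auto elim: inj_on_subset)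
  have gens: "liftX FX FY ` ?A \<union> liftY FX FY ` ?B
      = lift_pair FX FY ` (carrier ?GA \<times> {\<one>\<^bsub>?GB\<^esub>}) \<union> lift_pair FX FY ` ({\<one>\<^bsub>?GA\<^esub>} \<times> carrier ?GB)"
    by (auto simp: liftX_eq_lift_pair liftY_eq_lift_pair BijGroup_def)
  have "liftX FX FY ` ?A \<union> liftY FX FY ` ?B \<subseteq> lift_pair FX FY ` (?A \<times> ?B)"
    unfolding gens using subgroup.one_closed[OF SA] subgroup.one_closed[OF SB] by auto
  also have "\<dots> \<subseteq> aut m (FX \<times> FY) (prod_adj eta adjX adjY)"
    using lift_pair_in_aut_prod[OF assms(1,3)] by blast
  finally have "liftX FX FY ` ?A \<union> liftY FX FY ` ?B \<subseteq> aut m (FX \<times> FY) (prod_adj eta adjX adjY)" .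
  with DirProd_hom_image_generated_by_factors[OF groups hom, folded gens]
    DirProd_iso_subgroup_generated_by_factor_images[OF groups hom inj, folded gens]
  show ?thesis by simp
qed

end
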